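(* In the contention game with $k=2$ channels under acknowledgement-based feedback and $n\ge5$ players, the anonymous protocol $f^2$ (in every slot, regardless of history, a pending player transmits on each of the two channels with probability $1/2$ and never stays idle) is not an equilibrium protocol. In fact, when all other players use $f^2$, the protocol that does not transmit at $t=1$ and then follows $f^2$ gives any player strictly smaller expected latency than $f^2$.
   Context: Contention game: $n$ players, channels $K=\{1,\dots,k\}$, slots $t=1,2,\dots$; each player has one packet and is initially pending. In each slot a pending player chooses (possibly at random) an action in $\{0,1,\dots,k\}$ ($0$ = idle, $a$ = transmit on channel $a$). A lone transmitter on a channel succeeds and leaves; two or more transmitters on a channel collide and remain pending. Latency = slot of a player's successful transmission; players minimize expected latency. Acknowledgement-based feedback: only a player who attempted transmission learns whether she succeeded; decision rules depend only on the personal action history. An anonymous protocol is an equilibrium protocol if, when all players use it, no player at any slot and after any history can decrease her conditional expected latency by unilaterally deviating. *)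

theory Defs
  imports "HOL-Probability.Probability_Mass_Function"
begin

text \<open>Actions: 0 = idle, 1 = transmit on channel 1, 2 = transmit on channel 2.
  A pending player's personal history is the list of her own past actions
  (all her past transmissions failed, otherwise she would not be pending,
  so the feedback is determined by the actions).\<close>

type_synonym protocol = "nat list \<Rightarrow> nat pmf"

definition f2 :: protocol where
  "f2 h = pmf_of_set {1, 2}"

definition idle_first :: protocol where
  "idle_first h = (if h = [] then return_pmf 0 else pmf_of_set {1, 2})"

text \<open>Survival probability of a focal player who uses decision rule g while all
  other players use f^2.  surv g t h m is the probability that the
  focal player is still pending after t further slots, given that her history
  is h and m other players are currently pending.  In one slot each of the m
  others independently picks channel 1 or 2 with probability 1/2; j is the
  number of others on channel 1 (probability (m choose j)/2^m).  A lone
  transmitter on a channel succeeds and leaves.\<close>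
primrec surv :: "protocol \<Rightarrow> nat \<Rightarrow> nat list \<Rightarrow> nat \<Rightarrow> real" where
  "surv g 0 h m = 1"
| "surv g (Suc t) h m =
     (\<Sum>a\<in>{0::nat, 1, 2}. pmf (g h) a *
        (\<Sum>j\<le>m. real (m choose j) / 2 ^ m *
           (if a = 0 then
              surv g t (h @ [0])
                (m - (if j = 1 then 1 else 0) - (if m - j = 1 then 1 else 0))
            else if a = 1 then
              (if j = 0 then 0
               else surv g t (h @ [1]) (m - (if m - j = 1 then 1 else 0)))
            else
              (if m - j = 0 then 0
               else surv g t (h @ [2]) (m - (if j = 1 then 1 else 0))))))"

text \<open>Expected latency (slot of successful transmission, slots numbered from 1)
  of a player using g when the other n - 1 players use f^2:
  E[T] = sum over t \<ge> 0 of P(T > t).\<close>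
definition exp_latency :: "protocol \<Rightarrow> nat \<Rightarrow> ennreal" where
  "exp_latency g n = (\<Sum>t. ennreal (surv g t [] (n - 1)))"

end

theory Submission
  imports Defs
begin

text \<open>Against m opponents playing f2, a transmitting player survives a slot unless her channel
  is free of opponents, and the number of opponents drops by one exactly when some opponent is alone
  on the other channel. Summing the resulting linear recurrence for the survival probabilities, the
  expected latencies E(m) satisfy (m + 1) E(m) = 2^m + m E(m - 1) with E(1) = 2, so
  E(m) = 2^(m+1) / (m + 1): with n players, f2 has expected latency 2^n / n. Idling in the first
  slot wastes that slot but lets a lone transmitter on either channel leave; this gives expected
  latency (2^n + 4 - n) / n, which is smaller as soon as n > 4.\<close>

lemma surv_nonneg: "0 \<le> surv g t h m"
proof (induction t arbitrary: h m)
  case 0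
  show ?case by simp
next
  case (Suc t)
  show ?case
    unfolding surv.simps by (intro sum_nonneg mult_nonneg_nonneg) (auto simp: Suc.IH)
qed

lemma surv_f2_history_indep: "surv f2 t h m = surv f2 t h' m"
proof (induction t arbitrary: h h' m)
  case 0
  show ?case by simp
next
  case (Suc t)
  have "f2 h = f2 h'" by (simp add: f2_def)
  moreover have "\<And>a m. surv f2 t (h @ [a]) m = surv f2 t (h' @ [a]) m"
    by (rule Suc.IH)
  ultimately show ?case by (simp only: surv.simps)
qed

lemma surv_idle_first_eq_f2: "h \<noteq> [] \<Longrightarrow> surv idle_first t h m = surv f2 t h m"
proof (induction t arbitrary: h m)
  case 0
  show ?case by simp
next
  case (Suc t)
  have "idle_first h = f2 h" using Suc.prems by (simp add: idle_first_def f2_def)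
  moreover have "\<And>a m. surv idle_first t (h @ [a]) m = surv f2 t (h @ [a]) m"
    by (simp add: Suc.IH)
  ultimately show ?case by (simp only: surv.simps)
qed

definition surv_f2 :: "nat \<Rightarrow> nat \<Rightarrow> real" where
  "surv_f2 t m = surv f2 t [] m"

lemma surv_f2_0 [simp]: "surv_f2 0 m = 1"
  by (simp add: surv_f2_def)

lemma surv_f2_snoc: "surv f2 t (h @ [a]) m = surv_f2 t m"
  unfolding surv_f2_def by (rule surv_f2_history_indep)

lemma surv_idle_first_snoc: "surv idle_first t (h @ [a]) m = surv_f2 t m"
  by (simp add: surv_idle_first_eq_f2 surv_f2_snoc)

lemma surv_f2_nonneg: "0 \<le> surv_f2 t m"
  unfolding surv_f2_def by (rule surv_nonneg)

definition binom_weight :: "nat \<Rightarrow> nat \<Rightarrow> real" where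
  "binom_weight m j = real (m choose j) / 2 ^ m"

lemma sum_binom_weight: "(\<Sum>j\<le>m. binom_weight m j) = 1"
proof -
  have "(\<Sum>j\<le>m. real (m choose j)) = 2 ^ m"
    using choose_row_sum[of m] by (metis of_nat_numeral of_nat_power of_nat_sum)
  then show ?thesis by (simp add: binom_weight_def flip: sum_divide_distrib)
qed

lemma binom_weight_0 [simp]: "binom_weight m 0 = 1 / 2 ^ m"
  and binom_weight_self [simp]: "binom_weight m m = 1 / 2 ^ m"
  and binom_weight_1 [simp]: "binom_weight m 1 = m / 2 ^ m"
  by (simp_all add: binom_weight_def)

lemma binom_weight_diff_1: "1 \<le> m \<Longrightarrow> binom_weight m (m - 1) = m / 2 ^ m"
  using binomial_symmetric[of 1 m] by (simp add: binom_weight_def)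

lemma sum_weighted_two_exceptions:
  fixes w f :: "'a \<Rightarrow> real"
  assumes "finite A" "sum w A = 1" "i \<in> A" "k \<in> A" "i \<noteq> k"
    and "\<And>j. j \<in> A \<Longrightarrow> j \<noteq> i \<Longrightarrow> j \<noteq> k \<Longrightarrow> f j = c"
  shows "(\<Sum>j\<in>A. w j * f j) = c + w i * (f i - c) + w k * (f k - c)"
proof -
  have "(\<Sum>j\<in>A. w j * f j) = c * sum w A + (\<Sum>j\<in>A. w j * (f j - c))"
    by (simp add: sum_distrib_left sum_distrib_right algebra_simps flip: sum.distrib)
  also have "(\<Sum>j\<in>A. w j * (f j - c)) = (\<Sum>j\<in>{i, k}. w j * (f j - c))"
    using assms by (intro sum.mono_neutral_right) auto
  finally show ?thesis
    using assms by simp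
qed

lemma surv_f2_Suc_binom:
  "surv_f2 (Suc t) m =
     (\<Sum>j\<le>m. binom_weight m j *
        (if j = 0 then 0 else surv_f2 t (m - (if m - j = 1 then 1 else 0)))) / 2
   + (\<Sum>j\<le>m. binom_weight m j *
        (if m - j = 0 then 0 else surv_f2 t (m - (if j = 1 then 1 else 0)))) / 2"
  unfolding binom_weight_def surv_f2_def[of "Suc t"]
  by (simp only: surv.simps surv_f2_snoc) (simp add: f2_def pmf_of_set sum_divide_distrib)

lemma surv_f2_Suc:
  assumes "2 \<le> m"
  shows "surv_f2 (Suc t) m
           = (1 - (real m + 1) / 2 ^ m) * surv_f2 t m + m / 2 ^ m * surv_f2 t (m - 1)"
proof -
  let ?c = "surv_f2 t m" and ?d = "surv_f2 t (m - 1)"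
  have channel_1: "(\<Sum>j\<le>m. binom_weight m j *
          (if j = 0 then 0 else surv_f2 t (m - (if m - j = 1 then 1 else 0))))
        = ?c + 1 / 2 ^ m * (0 - ?c) + m / 2 ^ m * (?d - ?c)"
    using assms binom_weight_diff_1[of m]
    by (subst sum_weighted_two_exceptions[where i = 0 and k = "m - 1" and c = ?c])
      (auto simp: sum_binom_weight)
  have channel_2: "(\<Sum>j\<le>m. binom_weight m j *
          (if m - j = 0 then 0 else surv_f2 t (m - (if j = 1 then 1 else 0))))
        = ?c + 1 / 2 ^ m * (0 - ?c) + m / 2 ^ m * (?d - ?c)"
    using assms binom_weight_1[of m]
    by (subst sum_weighted_two_exceptions[where i = m and k = 1 and c = ?c])
      (auto simp: sum_binom_weight)
  show ?thesis
    unfolding surv_f2_Suc_binom channel_1 channel_2 by (simp add: field_simps)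
qed

lemma surv_f2_one: "surv_f2 t 1 = (1 / 2) ^ t"
proof (induction t)
  case 0
  show ?case by simp
next
  case (Suc t)
  have "surv_f2 (Suc t) 1 = surv_f2 t 1 / 2"
    by (simp add: surv_f2_Suc_binom atMost_Suc binom_weight_def)
  with Suc.IH show ?case by simp
qed

lemma surv_f2_le_geometric: "1 \<le> m \<Longrightarrow> surv_f2 t m \<le> (1 - 1 / 2 ^ m) ^ t"
proof (induction t arbitrary: m)
  case 0
  show ?case by simp
next
  case (Suc t)
  define \<rho> :: real where "\<rho> = 1 - 1 / 2 ^ m"
  consider "m = 1" | "2 \<le> m" using Suc.prems by linarith
  then show ?case
  proof cases
    case 1
    then show ?thesis using surv_f2_one[of "Suc t"] by simp
  next
    case 2
    define q :: real where "q = 1 - (real m + 1) / 2 ^ m"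
    have "real m + 1 \<le> 2 ^ m"
      using of_nat_le_iff[of "m + 1" "2 ^ m", where 'a = real] less_exp[of m] by simp
    then have "0 \<le> q" by (simp add: q_def)
    have "surv_f2 t (m - 1) \<le> (1 - 1 / 2 ^ (m - 1)) ^ t"
      using 2 Suc.IH by simp
    also have "\<dots> \<le> \<rho> ^ t"
      unfolding \<rho>_def using 2 by (intro power_mono) (auto simp: field_simps)
    finally have "surv_f2 t (m - 1) \<le> \<rho> ^ t" .
    moreover have "surv_f2 t m \<le> \<rho> ^ t"
      using 2 Suc.IH unfolding \<rho>_def by simp
    ultimately have "surv_f2 (Suc t) m \<le> q * \<rho> ^ t + m / 2 ^ m * \<rho> ^ t"
      unfolding surv_f2_Suc[OF 2] q_def[symmetric] using \<open>0 \<le> q\<close>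
      by (intro add_mono mult_left_mono) auto
    also have "\<dots> = \<rho> ^ Suc t"
      by (simp add: q_def \<rho>_def field_simps)
    finally show ?thesis unfolding \<rho>_def .
  qed
qed

lemma summable_surv_f2: "1 \<le> m \<Longrightarrow> summable (\<lambda>t. surv_f2 t m)"
  by (rule summable_comparison_test'[of "\<lambda>t. (1 - 1 / 2 ^ m) ^ t"])
    (auto intro: summable_geometric simp: surv_f2_le_geometric surv_f2_nonneg)

lemma surv_f2_sums_rec:
  assumes "2 \<le> m" "(\<lambda>t. surv_f2 t m) sums L" "(\<lambda>t. surv_f2 t (m - 1)) sums L'"
  shows "(real m + 1) * L = 2 ^ m + m * L'"
proof -
  have "(\<lambda>t. surv_f2 (Suc t) m) sums (L - 1)"
    using assms(2) by (simp add: sums_Suc_iff[of "\<lambda>t. surv_f2 t m"])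
  moreover have "(\<lambda>t. surv_f2 (Suc t) m) sums ((1 - (real m + 1) / 2 ^ m) * L + m / 2 ^ m * L')"
    unfolding surv_f2_Suc[OF assms(1)] using assms(2,3) by (intro sums_add sums_mult)
  ultimately have "L - 1 = (1 - (real m + 1) / 2 ^ m) * L + m / 2 ^ m * L'"
    by (rule sums_unique2)
  then show ?thesis
    by (simp add: field_simps)
qed

lemma surv_f2_sums: "1 \<le> m \<Longrightarrow> (\<lambda>t. surv_f2 t m) sums (2 ^ (m + 1) / (real m + 1))"
proof (induction m rule: nat_induct_at_least)
  case base
  have "(\<lambda>t. (1 / 2 :: real) ^ t) sums (1 / (1 - 1 / 2))"
    by (rule geometric_sums) simp
  then show ?case by (simp add: surv_f2_one[unfolded One_nat_def])
next
  case (Suc m)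
  let ?L = "\<Sum>t. surv_f2 t (Suc m)"
  have L_sums: "(\<lambda>t. surv_f2 t (Suc m)) sums ?L"
    by (simp add: summable_surv_f2 summable_sums)
  have "(real (Suc m) + 1) * ?L = 2 ^ Suc m + Suc m * (2 ^ (m + 1) / (real m + 1))"
    using Suc by (intro surv_f2_sums_rec L_sums) simp_all
  also have "Suc m * (2 ^ (m + 1) / (real m + 1)) = 2 ^ Suc m"
    by (simp add: add.commute)
  finally have "?L = 2 ^ (Suc m + 1) / (real (Suc m) + 1)"
    by (simp add: field_simps)
  with L_sums show ?case by simp
qed

lemma exp_latency_f2: "2 \<le> n \<Longrightarrow> exp_latency f2 n = ennreal (2 ^ n / n)"
proof -
  assume "2 \<le> n"
  define m where "m = n - 1"
  have n: "n = Suc m" and "1 \<le> m"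
    using \<open>2 \<le> n\<close> by (simp_all add: m_def)
  have "exp_latency f2 n = ennreal (2 ^ (m + 1) / (real m + 1))"
    unfolding exp_latency_def n surv_f2_def[symmetric] diff_Suc_1
    by (intro suminf_ennreal_eq surv_f2_nonneg surv_f2_sums \<open>1 \<le> m\<close>)
  then show ?thesis
    by (simp add: n add.commute)
qed

lemma surv_idle_first_Suc_binom:
  "surv idle_first (Suc t) [] m =
     (\<Sum>j\<le>m. binom_weight m j *
        surv_f2 t (m - (if j = 1 then 1 else 0) - (if m - j = 1 then 1 else 0)))"
  unfolding binom_weight_def
  by (simp only: surv.simps surv_idle_first_snoc; simp add: idle_first_def del: pmf_return; simp)

text \<open>For \<open>m = 2\<close> both channels can carry a lone opponent at once; \<open>3 \<le> m\<close> excludes this.\<close>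

lemma surv_idle_first_Suc:
  assumes "3 \<le> m"
  shows "surv idle_first (Suc t) [] m
           = surv_f2 t m + 2 * real m / 2 ^ m * (surv_f2 t (m - 1) - surv_f2 t m)"
proof -
  let ?c = "surv_f2 t m" and ?d = "surv_f2 t (m - 1)"
  have "surv idle_first (Suc t) [] m = ?c + m / 2 ^ m * (?d - ?c) + m / 2 ^ m * (?d - ?c)"
    unfolding surv_idle_first_Suc_binom using assms binom_weight_1[of m] binom_weight_diff_1[of m]
    by (subst sum_weighted_two_exceptions[where i = 1 and k = "m - 1" and c = ?c])
      (auto simp: sum_binom_weight)
  also have "\<dots> = ?c + 2 * real m / 2 ^ m * (?d - ?c)"
    by (simp add: field_simps)
  finally show ?thesis .
qed

lemma exp_latency_idle_first:
  "4 \<le> n \<Longrightarrow> exp_latency idle_first n = ennreal ((2 ^ n + 4 - real n) / n)"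
proof -
  assume "4 \<le> n"
  define m where "m = n - 1"
  have n: "n = Suc m" and "3 \<le> m"
    using \<open>4 \<le> n\<close> by (simp_all add: m_def)
  define x :: real where "x = 2 ^ m"
  have "(\<lambda>t. surv_f2 t m) sums (2 * x / (real m + 1))"
    using surv_f2_sums[of m] \<open>3 \<le> m\<close> by (simp add: x_def)
  moreover have "(\<lambda>t. surv_f2 t (m - 1)) sums (x / m)"
    using surv_f2_sums[of "m - 1"] \<open>3 \<le> m\<close> by (simp add: x_def of_nat_diff)
  ultimately have "(\<lambda>t. surv idle_first (Suc t) [] m) sums
      (2 * x / (real m + 1) + 2 * real m / x * (x / m - 2 * x / (real m + 1)))"
    unfolding surv_idle_first_Suc[OF \<open>3 \<le> m\<close>] x_def by (intro sums_add sums_mult sums_diff)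
  then have "(\<lambda>t. surv idle_first t [] m) sums
      (2 * x / (real m + 1) + 2 * real m / x * (x / m - 2 * x / (real m + 1))
        + surv idle_first 0 [] m)"
    by (rule sums_Suc_iff[THEN iffD1])
  also have "2 * x / (real m + 1) + 2 * real m / x * (x / m - 2 * x / (real m + 1))
      + surv idle_first 0 [] m = (2 ^ n + 4 - real n) / n"
  proof -
    have "0 < x" "0 < real m"
      using \<open>3 \<le> m\<close> by (simp_all add: x_def)
    then have "2 * real m / x * (x / m) = 2" and
      "2 * real m / x * (2 * x / (real m + 1)) = 4 * real m / (real m + 1)"
      by simp_all
    then have "2 * real m / x * (x / m - 2 * x / (real m + 1)) = 2 - 4 * real m / (real m + 1)"
      by (simp only: right_diff_distrib)
    moreover have "2 ^ n = 2 * x"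
      by (simp add: x_def n)
    ultimately show ?thesis
      by (simp add: n field_simps)
  qed
  finally show ?thesis
    unfolding exp_latency_def n diff_Suc_1 by (intro suminf_ennreal_eq surv_nonneg)
qed

theorem corollary2:
  fixes n :: nat
  assumes "n \<ge> 5"
  shows "exp_latency idle_first n < exp_latency f2 n"
proof -
  have "real n < 2 ^ n"
    by (metis less_exp of_nat_less_numeral_power_cancel_iff)
  then have "0 \<le> 2 ^ n + 4 - real n" by linarith
  then have "0 \<le> (2 ^ n + 4 - real n) / n" by simp
  moreover have "(2 ^ n + 4 - real n) / n < 2 ^ n / n"
    using assms by (simp add: divide_strict_right_mono)
  ultimately show ?thesis
    using assms by (simp add: exp_latency_f2 exp_latency_idle_first ennreal_less_iff)
qed

end
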